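(* Let $h$ be a probability density on $\mathbb{R}$ that is $(\alpha,\beta)$-admissible for functions $\alpha,\beta:(0,\infty)\to(0,\infty)$, let $\epsilon>0$, $k>0$, $l>0$, and set $\alpha'=\alpha(k\epsilon)$, $\beta'=\beta(l\epsilon)$. Let $u:D^n\times\mathcal{R}\to\mathbb{R}$ be a score function with finite candidate set $\mathcal{R}$, and let $S:D^n\times\mathcal{R}\to(0,\infty)$ be a $\beta'$-smooth upper bound on the local sensitivity of $u$. Consider the smooth private selection mechanism with $Z_r$ ($r\in\mathcal{R}$) i.i.d. with density $h$: $$M_{SPS}(x)=\operatorname{argmax}_{r\in\mathcal{R}}\Big\{u(x,r)+\frac{\max_{r'\in\mathcal{R}}S(x,r')}{\alpha'}\cdot Z_r\Big\}$$ (returning the first maximizer in a fixed ordering of $\mathcal{R}$ if there are several). Then $M_{SPS}$ is $\big((k+\tfrac{|\mathcal{R}|}{2}\, l)\,\epsilon\big)$-differentially private.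
   Context: $D^n$ denotes the set of datasets consisting of $n$ elements; Hamming distance $d(x,y)=|\{i:x_i\neq y_i\}|$; $x,y$ neighboring if $d(x,y)=1$. A randomized mechanism $M$ is $\epsilon$-differentially private if for all neighboring $x,y$ and all sets $\mathcal{S}$ of outputs, $\Pr[M(x)\in\mathcal{S}]\le e^{\epsilon}\Pr[M(y)\in\mathcal{S}]$. For a score function $u:D^n\times\mathcal{R}\to\mathbb{R}$, the local sensitivity at $x$ for $r$ is $LS_{u,\mathcal{R}}(x,r)=\max_{y:d(x,y)=1}|u(x,r)-u(y,r)|$. For $\beta>0$, $S:D^n\times\mathcal{R}\to\mathbb{R}$ is a $\beta$-smooth upper bound on the local sensitivity of $u$ if for every $r\in\mathcal{R}$: $S(x,r)\ge LS_{u,\mathcal{R}}(x,r)$ for all $x$, and $S(x,r)\le e^{\beta}S(y,r)$ for all $x,y$ with $d(x,y)=1$. Given functions $\alpha,\beta:(0,\infty)\to(0,\infty)$, a density $h$ on $\mathbb{R}$ is $(\alpha,\beta)$-admissible if for every $\epsilon>0$, every $\Delta\in\mathbb{R}$ with $|\Delta|\le\alpha(\epsilon)$, every $\lambda$ with $|\lambda|\le\beta(\epsilon)$ and every measurable $\mathcal{S}\subseteq\mathbb{R}$, with $Z\sim h$: $\Pr[Z\in\mathcal{S}]\le e^{\epsilon/2}\Pr[Z\in\mathcal{S}+\Delta]$ and $\Pr[Z\in\mathcal{S}]\le e^{\epsilon/2}\Pr[Z\in e^{\lambda}\mathcal{S}]$. *)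

theory Defs
  imports "HOL-Probability.Probability"
begin

text \<open>Datasets in D^n are lists of length n over a type 'd.\<close>

definition hamming :: "'d list \<Rightarrow> 'd list \<Rightarrow> nat" where
  "hamming x y = card {i. i < length x \<and> x ! i \<noteq> y ! i}"

definition neighboring :: "nat \<Rightarrow> 'd list \<Rightarrow> 'd list \<Rightarrow> bool" where
  "neighboring n x y \<longleftrightarrow> length x = n \<and> length y = n \<and> hamming x y = 1"

text \<open>A mechanism is given by its output distribution Pr[M(x) \<in> T], as a function
  of the dataset x and the output set T.\<close>
definition differentially_private ::
  "real \<Rightarrow> nat \<Rightarrow> ('d list \<Rightarrow> 'o set \<Rightarrow> real) \<Rightarrow> bool" where
  "differentially_private eps n Pr \<longleftrightarrow>
     (\<forall>x y T. neighboring n x y \<longrightarrow> Pr x T \<le> exp eps * Pr y T)"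

text \<open>S is a beta-smooth upper bound on the local sensitivity of u (datasets of length n,
  candidate set R).  "S(x,r) \<ge> LS(x,r)" is written as: S(x,r) bounds |u(x,r)-u(y,r)|
  for every neighbour y (i.e. S(x,r) is an upper bound of the set whose maximum is LS).\<close>
definition smooth_upper_bound ::
  "real \<Rightarrow> nat \<Rightarrow> 'r set \<Rightarrow> ('d list \<Rightarrow> 'r \<Rightarrow> real) \<Rightarrow> ('d list \<Rightarrow> 'r \<Rightarrow> real) \<Rightarrow> bool" where
  "smooth_upper_bound \<beta> n R u S \<longleftrightarrow>
     (\<forall>r\<in>R. (\<forall>x y. neighboring n x y \<longrightarrow> \<bar>u x r - u y r\<bar> \<le> S x r) \<and>
             (\<forall>x y. neighboring n x y \<longrightarrow> S x r \<le> exp \<beta> * S y r))"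

definition prob_density :: "(real \<Rightarrow> real) \<Rightarrow> bool" where
  "prob_density h \<longleftrightarrow> h \<in> borel_measurable borel \<and> (\<forall>t. 0 \<le> h t) \<and>
     (\<integral>\<^sup>+ t. ennreal (h t) \<partial>lborel) = 1"

definition admissible :: "(real \<Rightarrow> real) \<Rightarrow> (real \<Rightarrow> real) \<Rightarrow> (real \<Rightarrow> real) \<Rightarrow> bool" where
  "admissible \<alpha> \<beta> h \<longleftrightarrow>
     (\<forall>eps>0. \<forall>\<Delta> lam A. \<bar>\<Delta>\<bar> \<le> \<alpha> eps \<longrightarrow> \<bar>lam\<bar> \<le> \<beta> eps \<longrightarrow> A \<in> sets borel \<longrightarrow>
        measure (density lborel h) A \<le> exp (eps/2) * measure (density lborel h) ((\<lambda>s. s + \<Delta>) ` A) \<and>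
        measure (density lborel h) A \<le> exp (eps/2) * measure (density lborel h) ((\<lambda>s. exp lam * s) ` A))"

text \<open>Smooth private selection: the candidate set R is given as a list rs of distinct
  candidates (its order is the fixed tie-breaking order); z is the noise vector (Z_r).\<close>
definition sps_select ::
  "('d list \<Rightarrow> 'r \<Rightarrow> real) \<Rightarrow> ('d list \<Rightarrow> 'r \<Rightarrow> real) \<Rightarrow> 'r list \<Rightarrow> real \<Rightarrow> 'd list \<Rightarrow> ('r \<Rightarrow> real) \<Rightarrow> 'r" where
  "sps_select u S rs a x z =
     (let score = (\<lambda>r. u x r + Max (S x ` set rs) / a * z r)
      in the (find (\<lambda>r. \<forall>r'\<in>set rs. score r' \<le> score r) rs))"

definition sps_prob ::
  "(real \<Rightarrow> real) \<Rightarrow> ('d list \<Rightarrow> 'r \<Rightarrow> real) \<Rightarrow> ('d list \<Rightarrow> 'r \<Rightarrow> real) \<Rightarrow> 'r list \<Rightarrow> real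
     \<Rightarrow> 'd list \<Rightarrow> 'r set \<Rightarrow> real" where
  "sps_prob h u S rs a x T =
     (let P = PiM (set rs) (\<lambda>_. density lborel h)
      in measure P {z \<in> space P. sps_select u S rs a x z \<in> T})"

end

theory Submission
  imports Defs
begin

text \<open>Dividing all scores by \<open>\<sigma>\<^sub>x = max\<^sub>r S(x,r) / \<alpha>'\<close> turns the mechanism at \<open>x\<close> into
  report-noisy-max with scores \<open>u(x,r) / \<sigma>\<^sub>x\<close> and unit-scale noise \<open>Z\<close>.  For a neighbour \<open>y\<close>,
  normalised by the same \<open>\<sigma>\<^sub>x\<close>, the scores move by at most \<open>\<alpha>'\<close> (as \<open>|u(x,r) - u(y,r)| \<le> S(x,r)\<close>)
  and the noise is dilated by \<open>\<rho> = \<sigma>\<^sub>y / \<sigma>\<^sub>x\<close>, where \<open>|ln \<rho>| \<le> \<beta>'\<close> by smoothness of \<open>S\<close>.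
  Raising the noise of a winner \<open>r\<close> by \<open>2\<alpha>'\<close> keeps it the winner after the scores move by
  \<open>\<alpha>'\<close>, so with the other coordinates fixed, the winning set of \<open>Z\<^sub>r\<close> moves by at most
  \<open>2\<alpha>'\<close>; two uses of the shift property of \<open>h\<close> cost \<open>exp(k\<epsilon>)\<close>.  The dilation of the noise
  vector is absorbed coordinate by coordinate by the dilation property of \<open>h\<close>, at \<open>exp(l\<epsilon>/2)\<close>
  per candidate.\<close>

lemma nn_integral_le_of_emeasure_le:
  assumes sets_eq: "sets \<mu> = sets \<nu>"
    and dom: "\<And>A. A \<in> sets \<nu> \<Longrightarrow> emeasure \<mu> A \<le> c * emeasure \<nu> A"
    and g: "g \<in> borel_measurable \<nu>"
  shows "(\<integral>\<^sup>+x. g x \<partial>\<mu>) \<le> c * (\<integral>\<^sup>+x. g x \<partial>\<nu>)"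
proof -
  have "emeasure \<mu> A \<le> c * emeasure \<nu> A" for A
    using dom[of A] sets_eq by (cases "A \<in> sets \<nu>") (simp_all add: emeasure_notin_sets)
  then have "\<mu> \<le> scale_measure c \<nu>"
    unfolding le_measure_iff using sets_eq sets_eq_imp_space_eq[OF sets_eq]
    by (simp add: le_fun_def space_scale_measure)
  then have "(\<integral>\<^sup>+x. g x \<partial>\<mu>) \<le> (\<integral>\<^sup>+x. g x \<partial>scale_measure c \<nu>)"
    by (intro nn_integral_mono_measure) (simp add: sets_eq)
  also have "\<dots> = c * (\<integral>\<^sup>+x. g x \<partial>\<nu>)"
    using g by (simp add: nn_integral_scale_measure)
  finally show ?thesis .
qed

lemma nn_integral_PiM_le_power:
  fixes I :: "'i set"
  assumes \<mu>: "prob_space \<mu>" and \<nu>: "prob_space \<nu>" and sets_eq: "sets \<mu> = sets \<nu>"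
    and dom: "\<And>A. A \<in> sets \<nu> \<Longrightarrow> emeasure \<mu> A \<le> c * emeasure \<nu> A"
    and "finite I" and f: "f \<in> borel_measurable (PiM I (\<lambda>_. \<mu>))"
  shows "(\<integral>\<^sup>+x. f x \<partial>PiM I (\<lambda>_. \<mu>)) \<le> c ^ card I * (\<integral>\<^sup>+x. f x \<partial>PiM I (\<lambda>_. \<nu>))"
  using \<open>finite I\<close> f
proof (induction I arbitrary: f rule: finite_induct)
  case empty
  then show ?case by (simp add: PiM_empty)
next
  case (insert i I)
  interpret M: product_prob_space "\<lambda>_. \<mu>" by (intro product_prob_spaceI) (rule \<mu>)
  interpret N: product_prob_space "\<lambda>_. \<nu>" by (intro product_prob_spaceI) (rule \<nu>)
  have sets_PiM_eq: "sets (PiM J (\<lambda>_. \<mu>)) = sets (PiM J (\<lambda>_. \<nu>))" for J :: "'i set"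
    by (intro sets_PiM_cong) (simp_all add: sets_eq)
  have f[measurable]: "f \<in> borel_measurable (PiM (insert i I) (\<lambda>_. \<nu>))"
    using insert.prems by (simp add: measurable_cong_sets[OF sets_PiM_eq refl])
  let ?g = "\<lambda>x. \<integral>\<^sup>+ y. f (x(i := y)) \<partial>\<nu>"
  have g: "?g \<in> borel_measurable (PiM I (\<lambda>_. \<mu>))"
    unfolding measurable_cong_sets[OF sets_PiM_eq refl] by measurable
  have "(\<integral>\<^sup>+x. f x \<partial>PiM (insert i I) (\<lambda>_. \<mu>)) = (\<integral>\<^sup>+x. (\<integral>\<^sup>+y. f (x(i := y)) \<partial>\<mu>) \<partial>PiM I (\<lambda>_. \<mu>))"
    by (rule M.product_nn_integral_insert[OF insert(1,2) insert.prems])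
  also have "\<dots> \<le> (\<integral>\<^sup>+x. c * ?g x \<partial>PiM I (\<lambda>_. \<mu>))"
  proof (intro nn_integral_mono nn_integral_le_of_emeasure_le[OF sets_eq dom])
    fix x assume "x \<in> space (PiM I (\<lambda>_. \<mu>))"
    then have "x \<in> space (PiM I (\<lambda>_. \<nu>))"
      using sets_eq_imp_space_eq[OF sets_eq] by (simp add: space_PiM)
    then show "(\<lambda>y. f (x(i := y))) \<in> borel_measurable \<nu>" by measurable
  qed
  also have "\<dots> = c * (\<integral>\<^sup>+x. ?g x \<partial>PiM I (\<lambda>_. \<mu>))"
    by (rule nn_integral_cmult[OF g])
  also have "\<dots> \<le> c * (c ^ card I * (\<integral>\<^sup>+x. ?g x \<partial>PiM I (\<lambda>_. \<nu>)))"
    by (intro mult_left_mono insert.IH g) simp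
  also have "\<dots> = c * (c ^ card I * (\<integral>\<^sup>+x. f x \<partial>PiM (insert i I) (\<lambda>_. \<nu>)))"
    by (simp only: N.product_nn_integral_insert[OF insert(1,2) f])
  also have "\<dots> = c ^ card (insert i I) * (\<integral>\<^sup>+x. f x \<partial>PiM (insert i I) (\<lambda>_. \<nu>))"
    using insert(1,2) by (simp add: mult.assoc)
  finally show ?case .
qed

lemma emeasure_PiM_le_vimage_compose:
  assumes \<mu>: "prob_space \<mu>" and g[measurable]: "g \<in> measurable \<mu> \<mu>"
    and dom: "\<And>A. A \<in> sets \<mu> \<Longrightarrow> emeasure \<mu> A \<le> c * emeasure \<mu> (g -` A \<inter> space \<mu>)"
    and I: "finite I" and E: "E \<in> sets (PiM I (\<lambda>_. \<mu>))"
  shows "emeasure (PiM I (\<lambda>_. \<mu>)) E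
    \<le> c ^ card I * emeasure (PiM I (\<lambda>_. \<mu>)) (compose I g -` E \<inter> space (PiM I (\<lambda>_. \<mu>)))"
proof -
  define \<nu> where "\<nu> = distr \<mu> \<mu> g"
  have compose_g: "compose I g \<in> measurable (PiM I (\<lambda>_. \<mu>)) (PiM I (\<lambda>_. \<mu>))"
    unfolding compose_def by measurable
  have \<nu>: "prob_space \<nu>"
    unfolding \<nu>_def by (rule prob_space.prob_space_distr[OF \<mu> g])
  have sets_\<nu>: "sets \<nu> = sets \<mu>" by (simp add: \<nu>_def)
  have "emeasure \<mu> A \<le> c * emeasure \<nu> A" if "A \<in> sets \<nu>" for A
    using dom that by (simp add: \<nu>_def emeasure_distr)
  then have "emeasure (PiM I (\<lambda>_. \<mu>)) E \<le> c ^ card I * (\<integral>\<^sup>+x. indicator E x \<partial>PiM I (\<lambda>_. \<nu>))"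
    using nn_integral_PiM_le_power[OF \<mu> \<nu> sets_\<nu>[symmetric] _ I, of c "indicator E"] E by simp
  also have "PiM I (\<lambda>_. \<nu>) = distr (PiM I (\<lambda>_. \<mu>)) (PiM I (\<lambda>_. \<mu>)) (compose I g)"
    unfolding \<nu>_def by (rule distr_PiM_finite_prob_space'[symmetric, OF I \<mu> \<mu> g])
  also have "(\<integral>\<^sup>+x. indicator E x \<partial>\<dots>)
      = emeasure (PiM I (\<lambda>_. \<mu>)) (compose I g -` E \<inter> space (PiM I (\<lambda>_. \<mu>)))"
    using E compose_g by (simp add: emeasure_distr)
  finally show ?thesis .
qed

text \<open>The list fixes the tie-breaking order; \<open>first_argmax [] f\<close> is the junk value \<open>the None\<close>.\<close>

definition first_argmax :: "'a list \<Rightarrow> ('a \<Rightarrow> 'b::linorder) \<Rightarrow> 'a" where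
  "first_argmax rs f = the (find (\<lambda>r. \<forall>r'\<in>set rs. f r' \<le> f r) rs)"

lemma find_eq_Some_iff_takeWhile:
  "find P xs = Some r \<longleftrightarrow> r \<in> set xs \<and> P r \<and> (\<forall>x\<in>set (takeWhile (\<lambda>x. x \<noteq> r) xs). \<not> P x)"
  by (induction xs) auto

lemma first_argmax_eq_iff:
  assumes "rs \<noteq> []"
  shows "first_argmax rs f = r \<longleftrightarrow> r \<in> set rs \<and> (\<forall>r'\<in>set rs. f r' \<le> f r) \<and>
    (\<forall>r'\<in>set (takeWhile (\<lambda>x. x \<noteq> r) rs). f r' < f r)"
proof -
  let ?P = "\<lambda>r. \<forall>r'\<in>set rs. f r' \<le> f r"
  have "Max (f ` set rs) \<in> f ` set rs"
    using assms by (intro Max_in) auto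
  then obtain m where "m \<in> set rs" "f m = Max (f ` set rs)" by auto
  then have "?P m" by simp
  then obtain r0 where r0: "find ?P rs = Some r0"
    using \<open>m \<in> set rs\<close> by (cases "find ?P rs") (auto simp: find_None_iff)
  have "first_argmax rs f = r \<longleftrightarrow> find ?P rs = Some r"
    using r0 by (auto simp: first_argmax_def)
  also have "\<dots> \<longleftrightarrow> r \<in> set rs \<and> ?P r \<and> (\<forall>r'\<in>set (takeWhile (\<lambda>x. x \<noteq> r) rs). f r' < f r)"
  proof -
    have "\<not> ?P x \<longleftrightarrow> f x < f r" if "r \<in> set rs" "?P r" for x
      using that by (auto simp: not_le intro: less_le_trans)
    then show ?thesis
      unfolding find_eq_Some_iff_takeWhile by blast
  qed
  finally show ?thesis .
qed

lemma first_argmax_in: "rs \<noteq> [] \<Longrightarrow> first_argmax rs f \<in> set rs"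
  using first_argmax_eq_iff[of rs f "first_argmax rs f"] by simp

lemma first_argmax_cong:
  "(\<And>r. r \<in> set rs \<Longrightarrow> f r = g r) \<Longrightarrow> first_argmax rs f = first_argmax rs g"
  unfolding first_argmax_def by (intro arg_cong[where f=the] find_cong) auto

lemma first_argmax_strict_mono:
  fixes \<phi> :: "'b::linorder \<Rightarrow> 'c::linorder"
  assumes "strict_mono \<phi>"
  shows "first_argmax rs (\<lambda>r. \<phi> (f r)) = first_argmax rs f"
  using assms unfolding first_argmax_def by (simp add: strict_mono_less_eq)

lemma pred_first_argmax_eq:
  fixes F :: "'a \<Rightarrow> 'r \<Rightarrow> 'b::{second_countable_topology, linorder_topology}"
  assumes F: "\<And>r. r \<in> set rs \<Longrightarrow> (\<lambda>z. F z r) \<in> borel_measurable M"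
  shows "Measurable.pred M (\<lambda>z. first_argmax rs (F z) = r)"
proof (cases "rs \<noteq> [] \<and> r \<in> set rs")
  case True
  then have le: "Measurable.pred M (\<lambda>z. F z r' \<le> F z r)"
    and less: "Measurable.pred M (\<lambda>z. F z r' < F z r)" if "r' \<in> set rs" for r'
    using F that unfolding pred_def by (auto intro: borel_measurable_le borel_measurable_less)
  have "finite (set (takeWhile (\<lambda>x. x \<noteq> r) rs))" "set (takeWhile (\<lambda>x. x \<noteq> r) rs) \<subseteq> set rs"
    by (auto dest: set_takeWhileD)
  then show ?thesis
    unfolding first_argmax_eq_iff[OF conjunct1[OF True]] using True
    by (intro pred_intros_logic pred_intros_finite le less) auto
next
  case False
  then have "(\<lambda>z. first_argmax rs (F z) = r) = (\<lambda>z. rs = [] \<and> first_argmax [] (F z) = r)"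
    using first_argmax_in[of rs] by auto
  then show ?thesis by (simp add: first_argmax_def)
qed

lemma pred_first_argmax_mem:
  fixes F :: "'a \<Rightarrow> 'r \<Rightarrow> 'b::{second_countable_topology, linorder_topology}"
  assumes "\<And>r. r \<in> set rs \<Longrightarrow> (\<lambda>z. F z r) \<in> borel_measurable M"
  shows "Measurable.pred M (\<lambda>z. first_argmax rs (F z) \<in> T)"
proof (cases "rs = []")
  case True
  then show ?thesis by (simp add: first_argmax_def)
next
  case False
  then have "(first_argmax rs (F z) \<in> T) \<longleftrightarrow> (\<exists>r\<in>set rs \<inter> T. first_argmax rs (F z) = r)" for z
    using first_argmax_in by blast
  then show ?thesis
    using pred_first_argmax_eq[OF assms] by (simp only:) (intro pred_intros_finite, auto)
qed

lemma emeasure_PiM_insert_le_of_sections: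
  assumes \<mu>: "prob_space \<mu>" and I: "finite I" "i \<notin> I"
    and E[measurable]: "E \<in> sets (PiM (insert i I) (\<lambda>_. \<mu>))"
    and E'[measurable]: "E' \<in> sets (PiM (insert i I) (\<lambda>_. \<mu>))"
    and sections: "\<And>w. w \<in> space (PiM I (\<lambda>_. \<mu>)) \<Longrightarrow>
      emeasure \<mu> {s \<in> space \<mu>. w(i := s) \<in> E} \<le> c * emeasure \<mu> {s \<in> space \<mu>. w(i := s) \<in> E'}"
  shows "emeasure (PiM (insert i I) (\<lambda>_. \<mu>)) E \<le> c * emeasure (PiM (insert i I) (\<lambda>_. \<mu>)) E'"
proof -
  interpret product_prob_space "\<lambda>_. \<mu>" by (intro product_prob_spaceI) (rule \<mu>)
  have emeasure_eq: "emeasure (PiM (insert i I) (\<lambda>_. \<mu>)) F =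
      (\<integral>\<^sup>+w. (\<integral>\<^sup>+s. indicator F (w(i := s)) \<partial>\<mu>) \<partial>PiM I (\<lambda>_. \<mu>))"
    if "F \<in> sets (PiM (insert i I) (\<lambda>_. \<mu>))" for F
    using that by (simp add: product_nn_integral_insert[OF I, symmetric])
  have section_eq: "(\<integral>\<^sup>+s. indicator F (w(i := s)) \<partial>\<mu>) = emeasure \<mu> {s \<in> space \<mu>. w(i := s) \<in> F}"
    if "F \<in> sets (PiM (insert i I) (\<lambda>_. \<mu>))" "w \<in> space (PiM I (\<lambda>_. \<mu>))" for F w
  proof -
    have "(\<integral>\<^sup>+s. indicator F (w(i := s)) \<partial>\<mu>) = (\<integral>\<^sup>+s. indicator {s \<in> space \<mu>. w(i := s) \<in> F} s \<partial>\<mu>)"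
      by (intro nn_integral_cong) (simp add: indicator_def)
    also have "\<dots> = emeasure \<mu> {s \<in> space \<mu>. w(i := s) \<in> F}"
      using that measurable_component_update[OF that(2) I(2)]
      by (intro nn_integral_indicator) (auto intro: measurable_sets_Collect)
    finally show ?thesis .
  qed
  have "emeasure (PiM (insert i I) (\<lambda>_. \<mu>)) E \<le>
      (\<integral>\<^sup>+w. c * (\<integral>\<^sup>+s. indicator E' (w(i := s)) \<partial>\<mu>) \<partial>PiM I (\<lambda>_. \<mu>))"
    unfolding emeasure_eq[OF E] by (intro nn_integral_mono) (simp add: section_eq sections)
  also have "\<dots> = c * emeasure (PiM (insert i I) (\<lambda>_. \<mu>)) E'"
    unfolding emeasure_eq[OF E'] by (intro nn_integral_cmult) measurable
  finally show ?thesis .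
qed

lemma first_argmax_raise_winner:
  fixes a b z :: "'r \<Rightarrow> real"
  assumes win: "first_argmax rs (\<lambda>j. a j + z j) = r"
    and ab: "\<And>j. j \<in> set rs \<Longrightarrow> \<bar>a j - b j\<bar> \<le> d"
  shows "first_argmax rs (\<lambda>j. b j + (z(r := z r + 2 * d)) j) = r"
proof (cases "rs = []")
  case True
  with win show ?thesis by (simp add: first_argmax_def)
next
  case False
  from win have r: "r \<in> set rs"
    and max: "\<forall>j\<in>set rs. a j + z j \<le> a r + z r"
    and first: "\<forall>j\<in>set (takeWhile (\<lambda>x. x \<noteq> r) rs). a j + z j < a r + z r"
    unfolding first_argmax_eq_iff[OF False] by auto
  have "b j + z j \<le> b r + (z r + 2 * d)" if "j \<in> set rs" for j
    using max ab[OF that] ab[OF r] that by (auto simp: abs_le_iff)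
  moreover have "b j + z j < b r + (z r + 2 * d)" if "j \<in> set (takeWhile (\<lambda>x. x \<noteq> r) rs)" for j
    using first ab[OF conjunct1[OF set_takeWhileD[OF that]]] ab[OF r] that
    by (auto simp: abs_le_iff)
  ultimately show ?thesis
    unfolding first_argmax_eq_iff[OF False] using r by (auto dest: set_takeWhileD)
qed

lemma borel_measurable_PiM_component:
  assumes "sets \<mu> = sets borel" and "j \<in> I"
  shows "(\<lambda>z. z j) \<in> borel_measurable (PiM I (\<lambda>_. \<mu>))"
  using measurable_component_singleton[OF assms(2), of "\<lambda>_. \<mu>"]
  by (simp add: measurable_cong_sets[OF refl assms(1)])

lemma emeasure_first_argmax_shift_le:
  fixes \<mu> :: "real measure" and a b :: "'r \<Rightarrow> real"
  assumes \<mu>: "prob_space \<mu>" and sets_\<mu>: "sets \<mu> = sets borel"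
    and dom: "\<And>A. A \<in> sets borel \<Longrightarrow> emeasure \<mu> A \<le> c * emeasure \<mu> {s. s - d \<in> A}"
    and ab: "\<And>j. j \<in> set rs \<Longrightarrow> \<bar>a j - b j\<bar> \<le> d" and r: "r \<in> set rs"
  shows "emeasure (PiM (set rs) (\<lambda>_. \<mu>))
      {z \<in> space (PiM (set rs) (\<lambda>_. \<mu>)). first_argmax rs (\<lambda>j. a j + z j) = r}
    \<le> c\<^sup>2 * emeasure (PiM (set rs) (\<lambda>_. \<mu>))
      {z \<in> space (PiM (set rs) (\<lambda>_. \<mu>)). first_argmax rs (\<lambda>j. b j + z j) = r}"
proof -
  define I where "I = set rs - {r}"
  have rs_eq: "set rs = insert r I" and I: "finite I" "r \<notin> I"
    using r by (auto simp: I_def)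
  have space_\<mu>: "space \<mu> = UNIV"
    using sets_eq_imp_space_eq[OF sets_\<mu>] by simp
  define E where "E v = {z \<in> space (PiM (set rs) (\<lambda>_. \<mu>)). first_argmax rs (\<lambda>j. v j + z j) = r}"
    for v :: "'r \<Rightarrow> real"
  have E_sets: "E v \<in> sets (PiM (set rs) (\<lambda>_. \<mu>))" for v
  proof -
    have "Measurable.pred (PiM (set rs) (\<lambda>_. \<mu>)) (\<lambda>z. first_argmax rs (\<lambda>j. v j + z j) = r)"
      by (intro pred_first_argmax_eq borel_measurable_add borel_measurable_const
          borel_measurable_PiM_component[OF sets_\<mu>])
    then show ?thesis by (simp add: E_def pred_def)
  qed
  define H where "H v w = {s. first_argmax rs (\<lambda>j. v j + (w(r := s)) j) = r}"
    for v :: "'r \<Rightarrow> real" and w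
  have H_sets: "H v w \<in> sets borel" for v w
  proof -
    have "(\<lambda>s. v j + (w(r := s)) j) \<in> borel_measurable borel" for j
      by (cases "j = r") simp_all
    from pred_first_argmax_eq[of rs "\<lambda>s j. v j + (w(r := s)) j", OF this] show ?thesis
      by (simp add: H_def pred_def)
  qed
  have sections: "{s \<in> space \<mu>. w(r := s) \<in> E v} = H v w" if "w \<in> space (PiM I (\<lambda>_. \<mu>))" for v w
    using that I space_\<mu> by (auto simp: E_def H_def rs_eq space_PiM PiE_iff extensional_def)
  have shift_sets: "{s. s - d \<in> A} \<in> sets borel" if "A \<in> sets borel" for A :: "real set"
    using measurable_sets[of "\<lambda>s. s - d" borel borel A] that by (simp add: vimage_def)
  have H_le: "emeasure \<mu> (H a w) \<le> c\<^sup>2 * emeasure \<mu> (H b w)" for w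
  proof -
    have "{s. s - d - d \<in> H a w} \<subseteq> H b w"
    proof
      fix s assume "s \<in> {s. s - d - d \<in> H a w}"
      then have win: "first_argmax rs (\<lambda>j. a j + (w(r := s - d - d)) j) = r"
        by (simp add: H_def)
      have upd: "(w(r := s - d - d))(r := (w(r := s - d - d)) r + 2 * d) = w(r := s)"
        by simp
      from first_argmax_raise_winner[OF win ab] show "s \<in> H b w"
        by (simp only: upd H_def mem_Collect_eq)
    qed
    then have shifted_le: "emeasure \<mu> {s. s - d - d \<in> H a w} \<le> emeasure \<mu> (H b w)"
      using H_sets[of b w] by (intro emeasure_mono) (simp_all add: sets_\<mu>)
    have "emeasure \<mu> (H a w) \<le> c * emeasure \<mu> {s. s - d \<in> H a w}"
      by (rule dom[OF H_sets])
    also have "\<dots> \<le> c * (c * emeasure \<mu> {s. s - d - d \<in> H a w})"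
      using dom[OF shift_sets[OF H_sets], of a w] by (intro mult_left_mono) simp_all
    also have "\<dots> \<le> c * (c * emeasure \<mu> (H b w))"
      by (intro mult_left_mono shifted_le) simp_all
    finally show ?thesis
      by (simp add: power2_eq_square mult.assoc)
  qed
  have "emeasure (PiM (insert r I) (\<lambda>_. \<mu>)) (E a) \<le> c\<^sup>2 * emeasure (PiM (insert r I) (\<lambda>_. \<mu>)) (E b)"
    using E_sets[unfolded rs_eq]
    by (intro emeasure_PiM_insert_le_of_sections[OF \<mu> I]) (simp_all add: sections H_le)
  then show ?thesis
    unfolding rs_eq[symmetric] E_def .
qed

lemma emeasure_first_argmax_mem_shift_le:
  fixes \<mu> :: "real measure" and a b :: "'r \<Rightarrow> real"
  assumes \<mu>: "prob_space \<mu>" and sets_\<mu>: "sets \<mu> = sets borel" and rs: "rs \<noteq> []"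
    and dom: "\<And>A. A \<in> sets borel \<Longrightarrow> emeasure \<mu> A \<le> c * emeasure \<mu> {s. s - d \<in> A}"
    and ab: "\<And>j. j \<in> set rs \<Longrightarrow> \<bar>a j - b j\<bar> \<le> d"
  shows "emeasure (PiM (set rs) (\<lambda>_. \<mu>))
      {z \<in> space (PiM (set rs) (\<lambda>_. \<mu>)). first_argmax rs (\<lambda>j. a j + z j) \<in> T}
    \<le> c\<^sup>2 * emeasure (PiM (set rs) (\<lambda>_. \<mu>))
      {z \<in> space (PiM (set rs) (\<lambda>_. \<mu>)). first_argmax rs (\<lambda>j. b j + z j) \<in> T}"
proof -
  let ?P = "PiM (set rs) (\<lambda>_. \<mu>)"
  let ?E = "\<lambda>v r. {z \<in> space ?P. first_argmax rs (\<lambda>j. v j + z j) = r}"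
  have E_sets: "?E v r \<in> sets ?P" for v r
  proof -
    have "Measurable.pred ?P (\<lambda>z. first_argmax rs (\<lambda>j. v j + z j) = r)"
      by (intro pred_first_argmax_eq borel_measurable_add borel_measurable_const
          borel_measurable_PiM_component[OF sets_\<mu>])
    then show ?thesis by (simp add: pred_def)
  qed
  have "emeasure ?P {z \<in> space ?P. first_argmax rs (\<lambda>j. v j + z j) \<in> T}
      = (\<Sum>r\<in>set rs \<inter> T. emeasure ?P (?E v r))" for v
  proof -
    have "{z \<in> space ?P. first_argmax rs (\<lambda>j. v j + z j) \<in> T} = (\<Union>r\<in>set rs \<inter> T. ?E v r)"
      using first_argmax_in[OF rs] by auto
    then show ?thesis
      by (simp only:) (rule sum_emeasure[symmetric], auto simp: disjoint_family_on_def E_sets)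
  qed
  moreover have "(\<Sum>r\<in>set rs \<inter> T. emeasure ?P (?E a r))
      \<le> c\<^sup>2 * (\<Sum>r\<in>set rs \<inter> T. emeasure ?P (?E b r))"
    unfolding sum_distrib_left
    by (intro sum_mono emeasure_first_argmax_shift_le[OF \<mu> sets_\<mu> dom ab]) auto
  ultimately show ?thesis by simp
qed

lemma emeasure_first_argmax_mem_scale_le:
  fixes \<mu> :: "real measure" and b :: "'r \<Rightarrow> real"
  assumes \<mu>: "prob_space \<mu>" and sets_\<mu>: "sets \<mu> = sets borel"
    and dom: "\<And>A. A \<in> sets borel \<Longrightarrow> emeasure \<mu> A \<le> c * emeasure \<mu> ((\<lambda>s. \<rho> * s) -` A)"
  shows "emeasure (PiM (set rs) (\<lambda>_. \<mu>))
      {z \<in> space (PiM (set rs) (\<lambda>_. \<mu>)). first_argmax rs (\<lambda>j. b j + z j) \<in> T}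
    \<le> c ^ card (set rs) * emeasure (PiM (set rs) (\<lambda>_. \<mu>))
      {z \<in> space (PiM (set rs) (\<lambda>_. \<mu>)). first_argmax rs (\<lambda>j. b j + \<rho> * z j) \<in> T}"
proof -
  let ?P = "PiM (set rs) (\<lambda>_. \<mu>)"
  have space_\<mu>: "space \<mu> = UNIV"
    using sets_eq_imp_space_eq[OF sets_\<mu>] by simp
  have scale: "(\<lambda>s. \<rho> * s) \<in> measurable \<mu> \<mu>"
    by (simp add: measurable_cong_sets[OF sets_\<mu> sets_\<mu>])
  have "Measurable.pred ?P (\<lambda>z. first_argmax rs (\<lambda>j. b j + z j) \<in> T)"
    by (intro pred_first_argmax_mem borel_measurable_add borel_measurable_const
        borel_measurable_PiM_component[OF sets_\<mu>])
  then have E_sets: "{z \<in> space ?P. first_argmax rs (\<lambda>j. b j + z j) \<in> T} \<in> sets ?P"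
    by (simp add: pred_def)
  have "compose (set rs) (\<lambda>s. \<rho> * s) -` {z \<in> space ?P. first_argmax rs (\<lambda>j. b j + z j) \<in> T}
        \<inter> space ?P
      = {z \<in> space ?P. first_argmax rs (\<lambda>j. b j + \<rho> * z j) \<in> T}"
    using space_\<mu> by (auto simp: space_PiM compose_def cong: first_argmax_cong)
  with emeasure_PiM_le_vimage_compose[OF \<mu> scale _ _ E_sets] dom space_\<mu> sets_\<mu>
  show ?thesis by simp
qed

lemma measure_first_argmax_mem_le:
  fixes \<mu> :: "real measure" and a b :: "'r \<Rightarrow> real"
  assumes \<mu>: "prob_space \<mu>" and sets_\<mu>: "sets \<mu> = sets borel" and rs: "rs \<noteq> []"
    and shift: "\<And>A. A \<in> sets borel \<Longrightarrow> measure \<mu> A \<le> c\<^sub>1 * measure \<mu> {s. s - d \<in> A}"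
    and scale: "\<And>A. A \<in> sets borel \<Longrightarrow> measure \<mu> A \<le> c\<^sub>2 * measure \<mu> ((\<lambda>s. \<rho> * s) -` A)"
    and ab: "\<And>j. j \<in> set rs \<Longrightarrow> \<bar>a j - b j\<bar> \<le> d"
  shows "measure (PiM (set rs) (\<lambda>_. \<mu>))
      {z \<in> space (PiM (set rs) (\<lambda>_. \<mu>)). first_argmax rs (\<lambda>j. a j + z j) \<in> T}
    \<le> c\<^sub>1\<^sup>2 * c\<^sub>2 ^ card (set rs) * measure (PiM (set rs) (\<lambda>_. \<mu>))
      {z \<in> space (PiM (set rs) (\<lambda>_. \<mu>)). first_argmax rs (\<lambda>j. b j + \<rho> * z j) \<in> T}"
proof -
  interpret prob_space \<mu> by (rule \<mu>)
  interpret P: prob_space "PiM (set rs) (\<lambda>_. \<mu>)" by (intro prob_space_PiM \<mu>)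
  have space_\<mu>: "space \<mu> = UNIV"
    using sets_eq_imp_space_eq[OF sets_\<mu>] by simp
  have c: "0 \<le> c\<^sub>1" "0 \<le> c\<^sub>2"
    using shift[of UNIV] scale[of UNIV] prob_space space_\<mu> by auto
  have "emeasure (PiM (set rs) (\<lambda>_. \<mu>))
      {z \<in> space (PiM (set rs) (\<lambda>_. \<mu>)). first_argmax rs (\<lambda>j. a j + z j) \<in> T}
    \<le> ennreal c\<^sub>1 ^ 2 * emeasure (PiM (set rs) (\<lambda>_. \<mu>))
      {z \<in> space (PiM (set rs) (\<lambda>_. \<mu>)). first_argmax rs (\<lambda>j. b j + z j) \<in> T}"
    using shift c by (intro emeasure_first_argmax_mem_shift_le[OF \<mu> sets_\<mu> rs _ ab])
      (simp add: emeasure_eq_measure ennreal_mult[symmetric])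
  also have "\<dots> \<le> ennreal c\<^sub>1 ^ 2 * (ennreal c\<^sub>2 ^ card (set rs) * emeasure (PiM (set rs) (\<lambda>_. \<mu>))
      {z \<in> space (PiM (set rs) (\<lambda>_. \<mu>)). first_argmax rs (\<lambda>j. b j + \<rho> * z j) \<in> T})"
    using scale c by (intro mult_left_mono emeasure_first_argmax_mem_scale_le[OF \<mu> sets_\<mu>])
      (simp_all add: emeasure_eq_measure ennreal_mult[symmetric])
  finally show ?thesis
    using c by (simp add: P.emeasure_eq_measure ennreal_power ennreal_mult[symmetric] mult.assoc)
qed

lemma prob_space_density_lborel:
  assumes "prob_density h"
  shows "prob_space (density lborel h)"
proof
  have "h \<in> borel_measurable lborel"
    using assms by (simp add: prob_density_def measurable_cong_sets[OF sets_lborel refl])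
  with assms show "emeasure (density lborel h) (space (density lborel h)) = 1"
    by (simp add: prob_density_def emeasure_density)
qed

lemma admissible_shift:
  assumes "admissible \<alpha> \<beta> h" "0 < e" "0 \<le> \<beta> e" "\<bar>\<Delta>\<bar> \<le> \<alpha> e" "A \<in> sets borel"
  shows "measure (density lborel h) A \<le> exp (e / 2) * measure (density lborel h) {s. s - \<Delta> \<in> A}"
proof -
  have "(\<lambda>s. s + \<Delta>) ` A = {s. s - \<Delta> \<in> A}"
    by (auto simp: image_iff) (metis diff_add_cancel)
  with assms show ?thesis
    unfolding admissible_def by (metis abs_zero)
qed

lemma admissible_scale:
  assumes "admissible \<alpha> \<beta> h" "0 < e" "0 \<le> \<alpha> e" "0 < \<rho>" "\<bar>ln \<rho>\<bar> \<le> \<beta> e" "A \<in> sets borel"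
  shows "measure (density lborel h) A \<le> exp (e / 2) * measure (density lborel h) ((\<lambda>s. \<rho> * s) -` A)"
proof -
  have "(\<lambda>s. exp (- ln \<rho>) * s) ` A = (\<lambda>s. \<rho> * s) -` A"
  proof (intro set_eqI iffI)
    fix s assume "s \<in> (\<lambda>s. \<rho> * s) -` A"
    moreover have "s = exp (- ln \<rho>) * (\<rho> * s)"
      using \<open>0 < \<rho>\<close> by (simp add: exp_minus)
    ultimately show "s \<in> (\<lambda>s. exp (- ln \<rho>) * s) ` A" by blast
  qed (use \<open>0 < \<rho>\<close> in \<open>auto simp: exp_minus mult.assoc[symmetric]\<close>)
  moreover have "\<bar>- ln \<rho>\<bar> \<le> \<beta> e" "\<bar>0\<bar> \<le> \<alpha> e"
    using assms by simp_all
  ultimately show ?thesis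
    using assms unfolding admissible_def by metis
qed

lemma neighboring_sym: "neighboring n x y \<Longrightarrow> neighboring n y x"
  unfolding neighboring_def hamming_def by (auto simp: eq_commute[of "y ! _"])

lemma Max_le_exp_Max_of_smooth_upper_bound:
  assumes "smooth_upper_bound B n R u S" "finite R" "R \<noteq> {}" "neighboring n x y"
  shows "Max (S x ` R) \<le> exp B * Max (S y ` R)"
proof -
  have "S x r \<le> exp B * Max (S y ` R)" if "r \<in> R" for r
  proof -
    have "S x r \<le> exp B * S y r"
      using assms(1,4) that by (simp add: smooth_upper_bound_def)
    also have "\<dots> \<le> exp B * Max (S y ` R)"
      using assms(2) that by simp
    finally show ?thesis .
  qed
  with assms(2,3) show ?thesis by simp
qed

lemma abs_ln_divide_le:
  fixes p q B :: real
  assumes "0 < p" "0 < q" "p \<le> exp B * q" "q \<le> exp B * p"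
  shows "\<bar>ln (p / q)\<bar> \<le> B"
proof -
  have "p / q \<le> exp B" "exp (- B) \<le> p / q"
    using assms by (simp_all add: field_simps exp_minus)
  then have "ln (p / q) \<le> B" "- B \<le> ln (p / q)"
    using assms by (metis divide_pos_pos exp_gt_zero ln_exp ln_le_cancel_iff, simp add: ln_ge_iff)
  then show ?thesis by linarith
qed

lemma sps_select_eq_first_argmax:
  assumes "0 < c"
  shows "sps_select u S rs a x z
    = first_argmax rs (\<lambda>r. u x r / c + Max (S x ` set rs) / a / c * z r)"
proof -
  have "strict_mono (\<lambda>t::real. t / c)"
    using assms by (simp add: strict_mono_def divide_strict_right_mono)
  from first_argmax_strict_mono[OF this, of rs "\<lambda>r. u x r + Max (S x ` set rs) / a * z r"]
  have "sps_select u S rs a x z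
      = first_argmax rs (\<lambda>r. (u x r + Max (S x ` set rs) / a * z r) / c)"
    by (simp add: sps_select_def first_argmax_def)
  also have "\<dots> = first_argmax rs (\<lambda>r. u x r / c + Max (S x ` set rs) / a / c * z r)"
    by (simp add: add_divide_distrib)
  finally show ?thesis .
qed

lemma sps_prob_neighboring_le:
  assumes h: "prob_density h" and rs: "rs \<noteq> []" and a: "0 < a"
    and S_pos: "\<And>x r. length x = n \<Longrightarrow> r \<in> set rs \<Longrightarrow> 0 < S x r"
    and smooth: "smooth_upper_bound B n (set rs) u S"
    and shift: "\<And>A. A \<in> sets borel \<Longrightarrow>
      measure (density lborel h) A \<le> c\<^sub>1 * measure (density lborel h) {s. s - a \<in> A}"
    and scale: "\<And>\<rho> A. 0 < \<rho> \<Longrightarrow> \<bar>ln \<rho>\<bar> \<le> B \<Longrightarrow> A \<in> sets borel \<Longrightarrow>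
      measure (density lborel h) A \<le> c\<^sub>2 * measure (density lborel h) ((\<lambda>s. \<rho> * s) -` A)"
    and xy: "neighboring n x y"
  shows "sps_prob h u S rs a x T \<le> c\<^sub>1\<^sup>2 * c\<^sub>2 ^ card (set rs) * sps_prob h u S rs a y T"
proof -
  define Mx My where "Mx = Max (S x ` set rs)" and "My = Max (S y ` set rs)"
  have "length x = n" "length y = n"
    using xy by (auto simp: neighboring_def)
  then have M_pos: "0 < Mx" "0 < My"
    using rs S_pos[of _ "hd rs"] by (auto simp: Mx_def My_def Max_gr_iff intro!: bexI[of _ "hd rs"])
  have ab: "\<bar>u x r / (Mx / a) - u y r / (Mx / a)\<bar> \<le> a" if "r \<in> set rs" for r
  proof -
    have "\<bar>u x r - u y r\<bar> \<le> Mx"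
      using smooth xy that by (force simp: smooth_upper_bound_def Mx_def intro: order_trans)
    then have "\<bar>u x r - u y r\<bar> * (a / Mx) \<le> Mx * (a / Mx)"
      using M_pos a by (intro mult_right_mono) simp_all
    moreover have "u x r / (Mx / a) - u y r / (Mx / a) = (u x r - u y r) * (a / Mx)"
      by (simp add: diff_divide_distrib[symmetric] left_diff_distrib)
    ultimately show ?thesis
      using M_pos a by (simp add: abs_mult)
  qed
  have ratio: "\<bar>ln (My / Mx)\<bar> \<le> B"
    using M_pos Max_le_exp_Max_of_smooth_upper_bound[OF smooth _ _ xy]
      Max_le_exp_Max_of_smooth_upper_bound[OF smooth _ _ neighboring_sym[OF xy]] rs
    by (intro abs_ln_divide_le) (simp_all add: Mx_def My_def)
  have "measure (PiM (set rs) (\<lambda>_. density lborel h))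
      {z \<in> space (PiM (set rs) (\<lambda>_. density lborel h)).
        first_argmax rs (\<lambda>r. u x r / (Mx / a) + z r) \<in> T}
    \<le> c\<^sub>1\<^sup>2 * c\<^sub>2 ^ card (set rs) * measure (PiM (set rs) (\<lambda>_. density lborel h))
      {z \<in> space (PiM (set rs) (\<lambda>_. density lborel h)).
        first_argmax rs (\<lambda>r. u y r / (Mx / a) + My / Mx * z r) \<in> T}"
    using M_pos by (intro measure_first_argmax_mem_le[OF prob_space_density_lborel[OF h] _ rs shift
          scale[OF _ ratio] ab]) simp_all
  then show ?thesis
    using M_pos a
    by (simp add: sps_prob_def Let_def sps_select_eq_first_argmax[of "Mx / a"] Mx_def My_def)
qed

theorem theorem2:
  fixes h :: "real \<Rightarrow> real" and \<alpha> \<beta> :: "real \<Rightarrow> real"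
    and eps k l :: real and n :: nat
    and u S :: "'d list \<Rightarrow> 'r \<Rightarrow> real" and rs :: "'r list"
  assumes "prob_density h"
    and "\<forall>t>0. \<alpha> t > 0" and "\<forall>t>0. \<beta> t > 0"
    and "admissible \<alpha> \<beta> h"
    and "eps > 0" and "k > 0" and "l > 0"
    and "distinct rs" and "rs \<noteq> []"
    and "\<forall>x r. length x = n \<longrightarrow> r \<in> set rs \<longrightarrow> S x r > 0"
    and "smooth_upper_bound (\<beta> (l * eps)) n (set rs) u S"
  shows "differentially_private ((k + real (length rs) / 2 * l) * eps) n
           (sps_prob h u S rs (\<alpha> (k * eps)))"
proof -
  have eps: "0 < k * eps" "0 < l * eps"
    using assms(5-7) by simp_all
  have \<alpha>: "0 < \<alpha> (k * eps)" "0 < \<alpha> (l * eps)" and \<beta>: "0 < \<beta> (k * eps)"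
    using assms(2,3) eps by simp_all
  have "exp (k * eps / 2) ^ 2 = exp (k * eps)"
    by (simp add: power2_eq_square mult_exp_exp)
  moreover have "exp (l * eps / 2) ^ card (set rs) = exp (real (length rs) * (l * eps / 2))"
    using assms(8) by (simp add: distinct_card exp_of_nat_mult[symmetric])
  ultimately have privacy_loss: "exp (k * eps / 2) ^ 2 * exp (l * eps / 2) ^ card (set rs)
      = exp ((k + real (length rs) / 2 * l) * eps)"
    by (simp add: mult_exp_exp algebra_simps)
  show ?thesis
    unfolding differentially_private_def privacy_loss[symmetric] using assms(10)
    by (intro allI impI sps_prob_neighboring_le[OF assms(1,9) \<alpha>(1) _ assms(11)]
        admissible_shift[OF assms(4) eps(1) less_imp_le[OF \<beta>]]
        admissible_scale[OF assms(4) eps(2) less_imp_le[OF \<alpha>(2)]]) (simp_all add: \<alpha>(1) less_imp_le)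
qed

end
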